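(* Let $x_1,\ldots,x_k$ be i.i.d. real standard Gaussian random variables, $\mathbf{x}=[x_1,\ldots,x_k]^T$, and let $a_1,\ldots,a_k$ be real numbers. For $l=1,\ldots,k$ let $\mathbf{a}_l=[a_1,\ldots,a_l,0,\ldots,0]^T\in\mathbb{R}^k$. For $1\le l<k$ define $y_l=a_{l+1}\,\mathbf{a}_l^T\mathbf{x}-\|\mathbf{a}_l\|^2x_{l+1}$. Then for every $h=l+1,\ldots,k$, the random variables $y_l$ and $\mathbf{a}_h^T\mathbf{x}$ are independent. *)

theory Defs
  imports "HOL-Probability.Probability"
begin

end

theory Submission
  imports Defs
begin

text \<open>
  Put S = a_1 x_1 + ... + a_l x_l and s = a_1^2 + ... + a_l^2, so that y_l = a_(l+1) S - s x_(l+1)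
  and a_h^T x = (S + a_(l+1) x_(l+1)) + T, where T = a_(l+2) x_(l+2) + ... + a_h x_h is independent
  of the pair (S, x_(l+1)). If s = 0 then y_l = 0. Otherwise S / sqrt s and x_(l+1) are independent
  standard Gaussians, and y_l and S + a_(l+1) x_(l+1) are, up to scaling, the two coordinates of a
  rotation of this pair. The standard Gaussian measure on the plane is rotation invariant, so these
  coordinates are independent, and the independence of T carries this over to a_h^T x.
\<close>

lemma std_normal_density_rotate:
  fixes c d p q :: real
  assumes "c\<^sup>2 + d\<^sup>2 = 1"
  shows "std_normal_density (c * q - d * p) * std_normal_density (d * q + c * p)
       = std_normal_density q * std_normal_density p"
proof -
  have "(c * q - d * p)\<^sup>2 + (d * q + c * p)\<^sup>2 = (c\<^sup>2 + d\<^sup>2) * (q\<^sup>2 + p\<^sup>2)"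
    by algebra
  with assms have "- (c * q - d * p)\<^sup>2 / 2 + - (d * q + c * p)\<^sup>2 / 2 = - q\<^sup>2 / 2 + - p\<^sup>2 / 2"
    by (simp add: field_simps)
  then show ?thesis
    unfolding std_normal_density_def by (simp add: mult_exp_exp algebra_simps)
qed

lemma nn_integral_lborel_shear:
  fixes c d :: real and F :: "real \<times> real \<Rightarrow> ennreal"
  assumes c: "c \<noteq> 0" and [measurable]: "F \<in> borel_measurable (borel \<Otimes>\<^sub>M borel)"
  shows "(\<integral>\<^sup>+u. \<integral>\<^sup>+w. F (u, w) \<partial>lborel \<partial>lborel)
       = (\<integral>\<^sup>+p. \<integral>\<^sup>+u. ennreal \<bar>1 / c\<bar> * F (u, (d * u + p) / c) \<partial>lborel \<partial>lborel)"
proof -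
  have inv_c: "1 / c \<noteq> 0"
    using c by simp
  have "(\<integral>\<^sup>+w. F (u, w) \<partial>lborel) = (\<integral>\<^sup>+p. ennreal \<bar>1 / c\<bar> * F (u, (d * u + p) / c) \<partial>lborel)" for u
    by (subst nn_integral_real_affine[OF _ inv_c, where t = "d * u / c"])
       (simp_all add: nn_integral_cmult add_divide_distrib)
  then have "(\<integral>\<^sup>+u. \<integral>\<^sup>+w. F (u, w) \<partial>lborel \<partial>lborel)
      = (\<integral>\<^sup>+u. \<integral>\<^sup>+p. ennreal \<bar>1 / c\<bar> * F (u, (d * u + p) / c) \<partial>lborel \<partial>lborel)"
    by simp
  also have "\<dots> = (\<integral>\<^sup>+p. \<integral>\<^sup>+u. ennreal \<bar>1 / c\<bar> * F (u, (d * u + p) / c) \<partial>lborel \<partial>lborel)"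
    by (rule lborel_pair.Fubini') measurable
  finally show ?thesis .
qed

lemma nn_integral_std_normal_rotation:
  fixes c d :: real and f :: "real \<times> real \<Rightarrow> ennreal"
  assumes cd: "c\<^sup>2 + d\<^sup>2 = 1" and c: "c \<noteq> 0"
    and [measurable]: "f \<in> borel_measurable (borel \<Otimes>\<^sub>M borel)"
  shows "(\<integral>\<^sup>+u. \<integral>\<^sup>+w. ennreal (std_normal_density u * std_normal_density w)
            * f (- d * u + c * w, c * u + d * w) \<partial>lborel \<partial>lborel)
       = (\<integral>\<^sup>+p. \<integral>\<^sup>+q. ennreal (std_normal_density p * std_normal_density q) * f (p, q) \<partial>lborel \<partial>lborel)"
proof -
  txt \<open>Substitute \<open>w = (d u + p) / c\<close>, swap the integrals, then substitute \<open>u = c q - d p\<close>.\<close>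
  let ?\<phi> = std_normal_density
  have shear: "- d * u + c * ((d * u + p) / c) = p" "c * u + d * ((d * u + p) / c) = (u + d * p) / c"
    for u p
  proof -
    have "c * u + d * ((d * u + p) / c) = ((c\<^sup>2 + d\<^sup>2) * u + d * p) / c"
      using c by (simp add: field_simps power2_eq_square)
    then show "c * u + d * ((d * u + p) / c) = (u + d * p) / c"
      using cd by simp
  qed (use c in simp)
  have unshear: "(d * (c * q - d * p) + p) / c = d * q + c * p" for p q
  proof -
    have "d * (c * q - d * p) + p = c * (d * q + c * p) + (1 - (c\<^sup>2 + d\<^sup>2)) * p"
      by (simp add: algebra_simps power2_eq_square)
    then show ?thesis
      using c cd by simp
  qed
  have jacobian: "ennreal \<bar>c\<bar> * ennreal (1 / \<bar>c\<bar>) = 1"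
    using c by (simp flip: ennreal_mult')
  have rotate: "?\<phi> (c * q - d * p) * ?\<phi> (d * q + c * p) = ?\<phi> p * ?\<phi> q" for p q
    by (metis std_normal_density_rotate[OF cd] mult.commute)
  have "(\<lambda>(u, w). ennreal (?\<phi> u * ?\<phi> w) * f (- d * u + c * w, c * u + d * w))
      \<in> borel_measurable (borel \<Otimes>\<^sub>M borel)"
    by measurable
  from nn_integral_lborel_shear[OF c this, where d = d]
  have "(\<integral>\<^sup>+u. \<integral>\<^sup>+w. ennreal (?\<phi> u * ?\<phi> w) * f (- d * u + c * w, c * u + d * w) \<partial>lborel \<partial>lborel)
      = (\<integral>\<^sup>+p. \<integral>\<^sup>+u. ennreal \<bar>1 / c\<bar> * (ennreal (?\<phi> u * ?\<phi> ((d * u + p) / c))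
                                    * f (p, (u + d * p) / c)) \<partial>lborel \<partial>lborel)"
    by (simp only: case_prod_conv shear)
  also have "\<dots> = (\<integral>\<^sup>+p. \<integral>\<^sup>+q. ennreal (?\<phi> p * ?\<phi> q) * f (p, q) \<partial>lborel \<partial>lborel)"
  proof (rule nn_integral_cong)
    fix p
    show "(\<integral>\<^sup>+u. ennreal \<bar>1 / c\<bar> * (ennreal (?\<phi> u * ?\<phi> ((d * u + p) / c)) * f (p, (u + d * p) / c)) \<partial>lborel)
        = (\<integral>\<^sup>+q. ennreal (?\<phi> p * ?\<phi> q) * f (p, q) \<partial>lborel)"
      by (subst nn_integral_real_affine[OF _ c, where t = "- d * p"])
         (simp_all add: c unshear jacobian rotate mult.assoc[symmetric] nn_integral_cmult[symmetric])
  qed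
  finally show ?thesis .
qed

lemma distr_std_normal_pair_rotation:
  fixes c d :: real
  assumes cd: "c\<^sup>2 + d\<^sup>2 = 1" and c: "c \<noteq> 0"
  shows "distr (std_normal_distribution \<Otimes>\<^sub>M std_normal_distribution) (borel \<Otimes>\<^sub>M borel)
           (\<lambda>(u, w). (- d * u + c * w, c * u + d * w))
       = std_normal_distribution \<Otimes>\<^sub>M std_normal_distribution"
    (is "distr ?N _ ?R = _")
proof -
  let ?\<phi>\<phi> = "\<lambda>(x, y). ennreal (std_normal_density x * std_normal_density y)"
  have N_pair: "?N = density (lborel \<Otimes>\<^sub>M lborel) ?\<phi>\<phi>"
    by (subst pair_measure_density)
       (auto intro: lborel.sigma_finite_measure_axioms
          prob_space_imp_sigma_finite[OF prob_space_normal_density]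
          simp: ennreal_mult' normal_density_nonneg case_prod_beta')
  show ?thesis
  proof (rule measure_eqI)
    fix G assume "G \<in> sets (distr ?N (borel \<Otimes>\<^sub>M borel) ?R)"
    then have [measurable]: "G \<in> sets (borel \<Otimes>\<^sub>M borel)"
      by simp
    have "emeasure (distr ?N (borel \<Otimes>\<^sub>M borel) ?R) G
        = (\<integral>\<^sup>+z. ?\<phi>\<phi> z * indicator G (?R z) \<partial>(lborel \<Otimes>\<^sub>M lborel))"
      unfolding N_pair
      by (subst emeasure_distr, measurable, subst emeasure_density, measurable)
         (auto simp: space_pair_measure intro!: nn_integral_cong split: split_indicator)
    also have "\<dots> = (\<integral>\<^sup>+u. \<integral>\<^sup>+w. ennreal (std_normal_density u * std_normal_density w)
             * indicator G (- d * u + c * w, c * u + d * w) \<partial>lborel \<partial>lborel)"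
      by (subst lborel.nn_integral_fst[symmetric]) (simp_all, measurable)
    also have "\<dots> = (\<integral>\<^sup>+p. \<integral>\<^sup>+q. ennreal (std_normal_density p * std_normal_density q)
             * indicator G (p, q) \<partial>lborel \<partial>lborel)"
      by (rule nn_integral_std_normal_rotation[OF cd c]) measurable
    also have "\<dots> = emeasure ?N G"
      unfolding N_pair
      by (subst emeasure_density, measurable, subst lborel.nn_integral_fst[symmetric]) (simp_all, measurable)
    finally show "emeasure (distr ?N (borel \<Otimes>\<^sub>M borel) ?R) G = emeasure ?N G" .
  qed (simp add: N_pair)
qed

lemma (in prob_space) indep_var_if_distr_Pair_eq_pair_measure:
  assumes X: "random_variable S X" and Y: "random_variable T Y"
    and "prob_space P" "prob_space Q" "sets P = sets S" "sets Q = sets T"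
    and joint: "distr M (S \<Otimes>\<^sub>M T) (\<lambda>\<omega>. (X \<omega>, Y \<omega>)) = P \<Otimes>\<^sub>M Q"
  shows "indep_var S X T Y"
proof -
  interpret P: prob_space P by fact
  interpret Q: prob_space Q by fact
  have XY: "random_variable (S \<Otimes>\<^sub>M T) (\<lambda>\<omega>. (X \<omega>, Y \<omega>))"
    using X Y by measurable
  have "distr M S X = distr (distr M (S \<Otimes>\<^sub>M T) (\<lambda>\<omega>. (X \<omega>, Y \<omega>))) S fst"
    using XY by (simp add: distr_distr comp_def)
  also have "\<dots> = distr (P \<Otimes>\<^sub>M Q) P fst"
    using joint \<open>sets P = sets S\<close> by (simp cong: distr_cong)
  also have "\<dots> = P"
    by (rule Q.distr_pair_fst)
  finally have X_law: "distr M S X = P" .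
  have "distr M T Y = distr (distr M (S \<Otimes>\<^sub>M T) (\<lambda>\<omega>. (X \<omega>, Y \<omega>))) T snd"
    using XY by (simp add: distr_distr comp_def)
  also have "\<dots> = distr (P \<Otimes>\<^sub>M Q) Q snd"
    using joint \<open>sets Q = sets T\<close> by (simp cong: distr_cong)
  also have "\<dots> = Q"
  proof (rule measure_eqI)
    fix A assume "A \<in> sets (distr (P \<Otimes>\<^sub>M Q) Q snd)"
    then have "A \<in> sets Q" by simp
    moreover have "snd -` A \<inter> space (P \<Otimes>\<^sub>M Q) = space P \<times> A"
      using sets.sets_into_space[OF \<open>A \<in> sets Q\<close>] by (auto simp: space_pair_measure)
    ultimately show "emeasure (distr (P \<Otimes>\<^sub>M Q) Q snd) A = emeasure Q A"
      by (simp add: emeasure_distr Q.emeasure_pair_measure_Times P.emeasure_space_1)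
  qed simp
  finally have Y_law: "distr M T Y = Q" .
  show ?thesis
    using X Y joint by (simp add: indep_var_distribution_eq X_law Y_law)
qed

lemma (in prob_space) indep_var_compose_blocks:
  assumes "indep_vars M' X I" "A \<inter> B = {}" "A \<subseteq> I" "B \<subseteq> I"
    and "F \<in> measurable (PiM A M') N1" "G \<in> measurable (PiM B M') N2"
  shows "indep_var N1 (\<lambda>\<omega>. F (\<lambda>i\<in>A. X i \<omega>)) N2 (\<lambda>\<omega>. G (\<lambda>i\<in>B. X i \<omega>))"
  using indep_var_compose[OF indep_var_restrict[OF assms(1-4)] assms(5,6)] by (simp add: comp_def)

lemma (in prob_space) indep_var_extend_by_independent:
  fixes Z W :: "'a \<Rightarrow> 'b" and f g k :: "'b \<Rightarrow> real" and h :: "real \<times> real \<Rightarrow> real"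
  assumes ZW: "indep_var N Z N' W"
    and fg: "indep_var borel (\<lambda>\<omega>. f (Z \<omega>)) borel (\<lambda>\<omega>. g (Z \<omega>))"
    and [measurable]: "f \<in> borel_measurable N" "g \<in> borel_measurable N" "k \<in> borel_measurable N'"
    and [measurable]: "h \<in> borel_measurable (borel \<Otimes>\<^sub>M borel)"
  shows "indep_var borel (\<lambda>\<omega>. f (Z \<omega>)) borel (\<lambda>\<omega>. h (g (Z \<omega>), k (W \<omega>)))"
proof -
  have [measurable]: "Z \<in> measurable M N" "W \<in> measurable M N'"
    using indep_var_rv1[OF ZW] indep_var_rv2[OF ZW] by auto
  define F :: "nat \<Rightarrow> 'a \<Rightarrow> real"
    where "F = (\<lambda>i \<omega>. if i = 0 then f (Z \<omega>) else if i = 1 then g (Z \<omega>) else k (W \<omega>))"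
  have "indep_vars (\<lambda>_. borel) F {0, 1, 2}"
  proof (subst indep_vars_finite[where E = "\<lambda>_. sets borel"])
    show "\<forall>A\<in>(\<Pi> i\<in>{0, 1, 2}. sets borel).
        prob (\<Inter>j\<in>{0, 1, 2}. F j -` A j \<inter> space M) = (\<Prod>j\<in>{0, 1, 2}. prob (F j -` A j \<inter> space M))"
    proof
      fix A assume "A \<in> (\<Pi> i\<in>{0::nat, 1, 2}. sets (borel :: real measure))"
      then have A [measurable]: "A 0 \<in> sets borel" "A 1 \<in> sets borel" "A 2 \<in> sets borel"
        by auto
      define G where "G = {z \<in> space N. f z \<in> A 0 \<and> g z \<in> A 1}"
      have [measurable]: "G \<in> sets N"
        unfolding G_def by measurable
      define H where "H = {z \<in> space N'. k z \<in> A 2}"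
      have [measurable]: "H \<in> sets N'"
        unfolding H_def by measurable
      have "(\<Inter>j\<in>{0, 1, 2}. F j -` A j \<inter> space M) = (\<lambda>\<omega>. (Z \<omega>, W \<omega>)) -` (G \<times> H) \<inter> space M"
        using measurable_space[OF \<open>Z \<in> measurable M N\<close>] measurable_space[OF \<open>W \<in> measurable M N'\<close>]
        by (auto simp: F_def G_def H_def)
      then have "prob (\<Inter>j\<in>{0, 1, 2}. F j -` A j \<inter> space M) = prob (Z -` G \<inter> space M) * prob (W -` H \<inter> space M)"
        using indep_varD[OF ZW, of G H] by simp
      also have "W -` H \<inter> space M = F 2 -` A 2 \<inter> space M"
        using measurable_space[OF \<open>W \<in> measurable M N'\<close>] by (auto simp: F_def H_def)
      also have "Z -` G \<inter> space M = (\<lambda>\<omega>. (f (Z \<omega>), g (Z \<omega>))) -` (A 0 \<times> A 1) \<inter> space M"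
        using measurable_space[OF \<open>Z \<in> measurable M N\<close>] by (auto simp: G_def)
      also have "prob \<dots> = prob (F 0 -` A 0 \<inter> space M) * prob (F 1 -` A 1 \<inter> space M)"
        using indep_varD[OF fg A(1,2)] by (simp add: F_def)
      finally show "prob (\<Inter>j\<in>{0, 1, 2}. F j -` A j \<inter> space M) = (\<Prod>j\<in>{0, 1, 2}. prob (F j -` A j \<inter> space M))"
        by (simp add: F_def mult.assoc)
    qed
  qed (auto simp: F_def sets.Int_stable sets.sets_into_space sets.sigma_sets_eq[of borel, unfolded space_borel])
  then have "indep_var borel (\<lambda>\<omega>. (\<lambda>i\<in>{0}. F i \<omega>) 0)
      borel (\<lambda>\<omega>. h ((\<lambda>i\<in>{1, 2}. F i \<omega>) 1, (\<lambda>i\<in>{1, 2}. F i \<omega>) 2))"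
    by (rule indep_var_compose_blocks) auto
  then show ?thesis
    by (simp add: F_def)
qed

lemma (in prob_space) weighted_sum_indep_std_normal:
  fixes X :: "'i \<Rightarrow> 'a \<Rightarrow> real" and w :: "'i \<Rightarrow> real"
  assumes I: "finite I" and ind: "indep_vars (\<lambda>_. borel) X I"
    and std: "\<And>i. i \<in> I \<Longrightarrow> distributed M lborel (X i) std_normal_density"
    and pos: "0 < (\<Sum>i\<in>I. (w i)\<^sup>2)"
  shows "distributed M lborel (\<lambda>\<omega>. \<Sum>i\<in>I. w i * X i \<omega>) (normal_density 0 (sqrt (\<Sum>i\<in>I. (w i)\<^sup>2)))"
proof -
  define J where "J = {i \<in> I. w i \<noteq> 0}"
  have J: "finite J" "J \<subseteq> I"
    using I by (auto simp: J_def)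
  have "J \<noteq> {}"
  proof
    assume "J = {}"
    then have "(\<Sum>i\<in>I. (w i)\<^sup>2) = 0"
      by (intro sum.neutral) (auto simp: J_def)
    with pos show False by simp
  qed
  moreover have "indep_vars (\<lambda>_. borel) (\<lambda>i \<omega>. w i * X i \<omega>) J"
    by (rule indep_vars_subset[OF indep_vars_compose2[OF ind]]) (use J in auto)
  moreover have "distributed M lborel (\<lambda>\<omega>. w i * X i \<omega>) (normal_density 0 \<bar>w i\<bar>)" if "i \<in> J" for i
    using normal_density_affine[of "X i" 0 1 "w i" 0] std[of i] that by (simp add: J_def)
  ultimately have "distributed M lborel (\<lambda>\<omega>. \<Sum>i\<in>J. w i * X i \<omega>)
      (normal_density (\<Sum>i\<in>J. 0) (sqrt (\<Sum>i\<in>J. \<bar>w i\<bar>\<^sup>2)))"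
    by (intro sum_indep_normal J) (auto simp: J_def)
  moreover have "(\<Sum>i\<in>J. \<bar>w i\<bar>\<^sup>2) = (\<Sum>i\<in>I. (w i)\<^sup>2)"
    by (rule sum.mono_neutral_cong_left) (auto simp: J I J_def)
  moreover have "(\<lambda>\<omega>. \<Sum>i\<in>J. w i * X i \<omega>) = (\<lambda>\<omega>. \<Sum>i\<in>I. w i * X i \<omega>)"
    by (intro ext sum.mono_neutral_left) (auto simp: J I J_def)
  ultimately show ?thesis
    by simp
qed

lemma (in prob_space) indep_var_std_normal_rotation:
  fixes U V :: "'a \<Rightarrow> real" and c d :: real
  assumes UV: "indep_var borel U borel V"
    and U: "distributed M lborel U std_normal_density"
    and V: "distributed M lborel V std_normal_density"
    and cd: "c\<^sup>2 + d\<^sup>2 = 1" and c: "c \<noteq> 0"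
  shows "indep_var borel (\<lambda>\<omega>. - d * U \<omega> + c * V \<omega>) borel (\<lambda>\<omega>. c * U \<omega> + d * V \<omega>)"
proof -
  have [measurable]: "U \<in> borel_measurable M" "V \<in> borel_measurable M"
    using U V by (auto dest: distributed_measurable)
  have law: "distr M borel W = std_normal_distribution"
    if "distributed M lborel W std_normal_density" for W
    using distributed_distr_eq_density[OF that] by (simp cong: distr_cong)
  have "distr M (borel \<Otimes>\<^sub>M borel) (\<lambda>\<omega>. (- d * U \<omega> + c * V \<omega>, c * U \<omega> + d * V \<omega>))
      = distr (distr M (borel \<Otimes>\<^sub>M borel) (\<lambda>\<omega>. (U \<omega>, V \<omega>))) (borel \<Otimes>\<^sub>M borel)
          (\<lambda>(u, w). (- d * u + c * w, c * u + d * w))"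
    by (simp add: distr_distr comp_def)
  also have "distr M (borel \<Otimes>\<^sub>M borel) (\<lambda>\<omega>. (U \<omega>, V \<omega>))
      = std_normal_distribution \<Otimes>\<^sub>M std_normal_distribution"
    using UV by (simp add: indep_var_distribution_eq law[OF U] law[OF V])
  also have "distr (std_normal_distribution \<Otimes>\<^sub>M std_normal_distribution) (borel \<Otimes>\<^sub>M borel)
      (\<lambda>(u, w). (- d * u + c * w, c * u + d * w)) = std_normal_distribution \<Otimes>\<^sub>M std_normal_distribution"
    by (rule distr_std_normal_pair_rotation[OF cd c])
  finally show ?thesis
    using real_dist_normal_dist
    by (intro indep_var_if_distr_Pair_eq_pair_measure) (simp_all add: real_distribution_def)
qed

lemma (in prob_space) indep_var_uncorrelated_normal_combinations:
  fixes S V :: "'a \<Rightarrow> real" and \<sigma> b :: real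
  assumes SV: "indep_var borel S borel V"
    and S: "distributed M lborel S (normal_density 0 \<sigma>)" and \<sigma>: "0 < \<sigma>"
    and V: "distributed M lborel V std_normal_density"
  shows "indep_var borel (\<lambda>\<omega>. b * S \<omega> - \<sigma>\<^sup>2 * V \<omega>) borel (\<lambda>\<omega>. S \<omega> + b * V \<omega>)"
proof -
  txt \<open>Both combinations are multiples of the coordinates of \<open>(S / \<sigma>, V)\<close> rotated by the
    angle with cosine \<open>\<sigma> / \<rho>\<close> and sine \<open>b / \<rho>\<close>.\<close>
  define \<rho> where "\<rho> = sqrt (\<sigma>\<^sup>2 + b\<^sup>2)"
  define c where "c = \<sigma> / \<rho>"
  define d where "d = b / \<rho>"
  have \<rho>: "0 < \<rho>"
    using \<sigma> by (simp add: \<rho>_def add_pos_nonneg)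
  have \<rho>c: "\<rho> * c = \<sigma>" and \<rho>d: "\<rho> * d = b"
    using \<rho> by (simp_all add: c_def d_def)
  have c: "c \<noteq> 0"
    using \<sigma> \<rho>c by auto
  have "\<rho>\<^sup>2 * (c\<^sup>2 + d\<^sup>2) = (\<rho> * c)\<^sup>2 + (\<rho> * d)\<^sup>2"
    by (simp add: algebra_simps power_mult_distrib)
  also have "\<dots> = \<rho>\<^sup>2"
    unfolding \<rho>c \<rho>d by (simp add: \<rho>_def)
  finally have cd: "c\<^sup>2 + d\<^sup>2 = 1"
    using \<rho> by simp
  define U where "U = (\<lambda>\<omega>. S \<omega> / \<sigma>)"
  have U: "distributed M lborel U std_normal_density"
    using normal_density_affine[OF S \<sigma>, of "1 / \<sigma>" 0] \<sigma> by (simp add: U_def)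
  have "indep_var borel ((\<lambda>x. x / \<sigma>) \<circ> S) borel ((\<lambda>x. x) \<circ> V)"
    by (rule indep_var_compose[OF SV]) simp_all
  then have UV: "indep_var borel U borel V"
    by (simp add: U_def comp_def)
  have "indep_var borel ((\<lambda>x. - (\<sigma> * \<rho>) * x) \<circ> (\<lambda>\<omega>. - d * U \<omega> + c * V \<omega>))
      borel ((\<lambda>x. \<rho> * x) \<circ> (\<lambda>\<omega>. c * U \<omega> + d * V \<omega>))"
    by (rule indep_var_compose[OF indep_var_std_normal_rotation[OF UV U V cd c]]) simp_all
  moreover have "(\<lambda>x. - (\<sigma> * \<rho>) * x) \<circ> (\<lambda>\<omega>. - d * U \<omega> + c * V \<omega>) = (\<lambda>\<omega>. b * S \<omega> - \<sigma>\<^sup>2 * V \<omega>)"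
    using c \<rho> by (simp add: fun_eq_iff U_def field_simps power2_eq_square flip: \<rho>c \<rho>d)
  moreover have "(\<lambda>x. \<rho> * x) \<circ> (\<lambda>\<omega>. c * U \<omega> + d * V \<omega>) = (\<lambda>\<omega>. S \<omega> + b * V \<omega>)"
    using c \<rho> by (simp add: fun_eq_iff U_def field_simps flip: \<rho>c \<rho>d)
  ultimately show ?thesis
    by simp
qed

lemma (in prob_space) indep_var_std_normal_residual:
  fixes X :: "'i \<Rightarrow> 'a \<Rightarrow> real" and a :: "'i \<Rightarrow> real"
  assumes ind: "indep_vars (\<lambda>_. borel) X I"
    and std: "\<And>i. i \<in> I \<Longrightarrow> distributed M lborel (X i) std_normal_density"
    and A: "finite A" "A \<subseteq> I" and B: "finite B" "B \<subseteq> I" and AB: "A \<inter> B = {}"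
    and j: "j \<in> I" "j \<notin> A" "j \<notin> B"
  shows "indep_var borel (\<lambda>\<omega>. a j * (\<Sum>i\<in>A. a i * X i \<omega>) - (\<Sum>i\<in>A. (a i)\<^sup>2) * X j \<omega>)
           borel (\<lambda>\<omega>. (\<Sum>i\<in>A. a i * X i \<omega>) + a j * X j \<omega> + (\<Sum>i\<in>B. a i * X i \<omega>))"
proof -
  define s where "s = (\<Sum>i\<in>A. (a i)\<^sup>2)"
  have "0 \<le> s"
    unfolding s_def by (simp add: sum_nonneg)
  then have "s = 0 \<or> 0 < s"
    by linarith
  then show ?thesis
  proof
    assume "s = 0"
    then have "a i = 0" if "i \<in> A" for i
      using A that by (simp add: s_def sum_nonneg_eq_0_iff)
    moreover have "indep_var borel (\<lambda>\<omega>. \<Sum>i\<in>A. a i * (\<lambda>i\<in>A. X i \<omega>) i)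
        borel (\<lambda>\<omega>. \<Sum>i\<in>insert j B. a i * (\<lambda>i\<in>insert j B. X i \<omega>) i)"
      by (rule indep_var_compose_blocks[OF ind]) (use A B AB j in auto)
    ultimately show ?thesis
      using B j by (simp add: \<open>s = 0\<close>)
  next
    assume "0 < s"
    have "indep_var borel (\<lambda>\<omega>. \<Sum>i\<in>A. a i * (\<lambda>i\<in>A. X i \<omega>) i) borel (\<lambda>\<omega>. (\<lambda>i\<in>{j}. X i \<omega>) j)"
      by (rule indep_var_compose_blocks[OF ind]) (use A j in auto)
    then have SV: "indep_var borel (\<lambda>\<omega>. \<Sum>i\<in>A. a i * X i \<omega>) borel (X j)"
      by simp
    have S: "distributed M lborel (\<lambda>\<omega>. \<Sum>i\<in>A. a i * X i \<omega>) (normal_density 0 (sqrt s))"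
      unfolding s_def
      by (rule weighted_sum_indep_std_normal[OF A(1) indep_vars_subset[OF ind A(2)]])
         (use A std \<open>0 < s\<close> s_def in auto)
    have "indep_var borel (\<lambda>\<omega>. a j * (\<Sum>i\<in>A. a i * X i \<omega>) - (sqrt s)\<^sup>2 * X j \<omega>)
        borel (\<lambda>\<omega>. (\<Sum>i\<in>A. a i * X i \<omega>) + a j * X j \<omega>)"
      using indep_var_uncorrelated_normal_combinations[OF SV S _ std[OF j(1)]] \<open>0 < s\<close> by simp
    then have "indep_var borel (\<lambda>\<omega>. a j * (\<Sum>i\<in>A. a i * (\<lambda>i\<in>insert j A. X i \<omega>) i) - s * (\<lambda>i\<in>insert j A. X i \<omega>) j)
        borel (\<lambda>\<omega>. (\<lambda>(p, t). p + t) ((\<Sum>i\<in>A. a i * (\<lambda>i\<in>insert j A. X i \<omega>) i) + a j * (\<lambda>i\<in>insert j A. X i \<omega>) j,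
                                      \<Sum>i\<in>B. a i * (\<lambda>i\<in>B. X i \<omega>) i))"
      by (intro indep_var_extend_by_independent[OF indep_var_restrict[OF ind]])
         (use A B AB j \<open>0 < s\<close> in auto)
    then show ?thesis
      by (simp add: s_def)
  qed
qed

theorem lemma1:
  fixes M :: "'s measure" and X :: "nat \<Rightarrow> 's \<Rightarrow> real"
    and a :: "nat \<Rightarrow> real" and k l h :: nat
  assumes "prob_space M"
    and "prob_space.indep_vars M (\<lambda>_. borel) X {1..k}"
    and "\<And>i. i \<in> {1..k} \<Longrightarrow> distributed M lborel (X i) std_normal_density"
    and "1 \<le> l" and "l < k" and "l + 1 \<le> h" and "h \<le> k"
  shows "prob_space.indep_var M
           borel (\<lambda>\<omega>. a (l + 1) * (\<Sum>i=1..l. a i * X i \<omega>)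
                       - (\<Sum>i=1..l. (a i)\<^sup>2) * X (l + 1) \<omega>)
           borel (\<lambda>\<omega>. \<Sum>i=1..h. a i * X i \<omega>)"
proof -
  interpret prob_space M
    by (rule assms(1))
  have split: "(\<Sum>i=1..h. f i) = (\<Sum>i=1..l. f i) + f (l + 1) + (\<Sum>i=l+2..h. f i)" for f :: "nat \<Rightarrow> real"
  proof -
    have "{1..h} = {1..l} \<union> insert (l + 1) {l + 2..h}"
      using assms(6) by auto
    then show ?thesis
      by (simp add: sum.union_disjoint add.assoc)
  qed
  have "indep_var borel (\<lambda>\<omega>. a (l + 1) * (\<Sum>i=1..l. a i * X i \<omega>) - (\<Sum>i=1..l. (a i)\<^sup>2) * X (l + 1) \<omega>)
      borel (\<lambda>\<omega>. (\<Sum>i=1..l. a i * X i \<omega>) + a (l + 1) * X (l + 1) \<omega> + (\<Sum>i=l+2..h. a i * X i \<omega>))"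
    by (rule indep_var_std_normal_residual[OF assms(2,3)]) (use assms in auto)
  then show ?thesis
    by (simp only: split)
qed

end
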